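(* Consider a preferential (dynamic) attachment circuit of index $m\ge1$ (model described in the context). For $n\ge1$ let $W_{n-1}$, $B_{n-1}$ be the numbers of white and blue external nodes after $n-1$ insertions, and let $\mathcal{W}_{n-1,m}$, $\mathcal{B}_{n-1,m}$ be the numbers of white and blue external nodes after all $m$ parents of node $n$ have been chosen (not counting the external node of node $n$ itself). Then, for every $n$ with $(m+1)n\ge 5$, $$\mathbb{E}[\mathcal{W}^2_{n-1,m}\mid \mathbb{F}_{n-1,0}]=\frac{(m+1)(n-1)\bigl((mn-m+n-2)W_{n-1}+m\bigr)W_{n-1}}{(mn+n-2)(mn+n-1)},$$ $$\mathbb{E}[\mathcal{B}^2_{n-1,m}\mid \mathbb{F}_{n-1,0}]=\frac{(m+1)(n-1)\bigl(\mathcal{C}_1W_{n-1}^2+\mathcal{C}_2W_{n-1}B_{n-1}+\mathcal{C}_3B_{n-1}^2+\mathcal{C}_4W_{n-1}+\mathcal{C}_5B_{n-1}\bigr)}{(mn+n-4)(mn+n-3)(mn+n-2)(mn+n-1)},$$ where $\mathcal{C}_1=4m(m-1)(mn-m+n-2)$, $\mathcal{C}_2=4m(mn-m+n-3)(mn-m+n-2)$, $\mathcal{C}_3=(mn-m+n-4)(mn-m+n-3)(mn-m+n-2)$, $\mathcal{C}_4=4m(m^2n^2-m^2n+2mn^2+m^2-7mn+n^2+m-6n+10)$, $\mathcal{C}_5=2m(mn-m+n-2)(2mn-m+2n-7)$.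
   Context: Preferential (dynamic) attachment circuit of index $m\ge1$: at time $0$ there is a single node labeled $0$. At each time $n\ge1$ a new node labeled $n$ is added and $m$ parents are chosen for it one at a time, with replacement, among nodes $0,\dots,n-1$. Before the $(i+1)$-th choice ($i=0,\dots,m-1$), each existing node $v$ is chosen with probability $\frac{d_i(v)+1}{\sum_{x}(d_i(x)+1)}$, where $d_i(x)$ is the outdegree of $x$ in the current multigraph including the edges created by the first $i$ choices for node $n$; after each choice an edge from the chosen parent to node $n$ is immediately added (multi-edges allowed, counted with multiplicity). External nodes: a node of outdegree $s$ carries $s+1$ external nodes; they are colored white if the node has outdegree $0$, blue if it has outdegree $1$, red if it has outdegree $\ge2$. During the insertion of node $n$, after $s$ of the $m$ parent choices ($0\le s\le m$), $\mathcal{W}_{n-1,s}$ and $\mathcal{B}_{n-1,s}$ denote the numbers of white and blue external nodes carried by nodes $0,\dots,n-1$; thus $\mathcal{W}_{n-1,0}=W_{n-1}$, $\mathcal{B}_{n-1,0}=B_{n-1}$, and after the sample, node $n$ adds one white external node. $\mathbb{F}_{n-1,0}$ is the $\sigma$-field generated by the evolution of the circuit up to the completion of the insertion of node $n-1$. *)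

theory Defs
  imports "HOL-Probability.Probability"
begin

text \<open>State of the circuit: the outdegree function of the nodes (nodes not yet
present have outdegree 0).  When node n is being inserted the existing nodes
are 0,...,n-1, i.e. the set {..<n}.\<close>

definition choice_mset :: "nat \<Rightarrow> (nat \<Rightarrow> nat) \<Rightarrow> nat multiset" where
  "choice_mset n d = (\<Sum>v\<in>{..<n}. replicate_mset (Suc (d v)) v)"

definition choice_step :: "nat \<Rightarrow> (nat \<Rightarrow> nat) \<Rightarrow> (nat \<Rightarrow> nat) pmf" where
  "choice_step n d = map_pmf (\<lambda>v. d(v := Suc (d v))) (pmf_of_multiset (choice_mset n d))"

fun parents :: "nat \<Rightarrow> nat \<Rightarrow> (nat \<Rightarrow> nat) \<Rightarrow> (nat \<Rightarrow> nat) pmf" where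
  "parents n 0 d = return_pmf d"
| "parents n (Suc s) d = bind_pmf (parents n s d) (choice_step n)"

text \<open>Distribution of the outdegree function after completion of the insertion
of node k (index m); at time 0 only node 0 with outdegree 0.\<close>
fun circuit :: "nat \<Rightarrow> nat \<Rightarrow> (nat \<Rightarrow> nat) pmf" where
  "circuit m 0 = return_pmf (\<lambda>_. 0)"
| "circuit m (Suc k) = bind_pmf (circuit m k) (parents (Suc k) m)"

text \<open>White external nodes among nodes 0..n-1 (outdegree 0 carries one external node).\<close>
definition white :: "nat \<Rightarrow> (nat \<Rightarrow> nat) \<Rightarrow> nat" where
  "white n d = card {v. v < n \<and> d v = 0}"

text \<open>Blue external nodes among nodes 0..n-1 (outdegree 1 carries two external nodes).\<close>
definition blue :: "nat \<Rightarrow> (nat \<Rightarrow> nat) \<Rightarrow> nat" where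
  "blue n d = 2 * card {v. v < n \<and> d v = 1}"

end

theory Submission
  imports Defs
begin

text \<open>Write \<open>T\<close> for the total weight \<open>size (choice_mset n d)\<close> of the existing nodes and
\<open>W\<close>, \<open>B\<close> for the white and blue counts. A parent choice hits a white external node with
probability \<open>W/T\<close> (then \<open>W\<close> drops by 1 and \<open>B\<close> grows by 2), a blue one with probability
\<open>B/T\<close> (then \<open>B\<close> drops by 2), and otherwise leaves \<open>W\<close>, \<open>B\<close> alone, while \<open>T\<close> always grows
by 1. Hence every \<open>H\<close> solving the corresponding one-step recurrence turns \<open>H(T,W,B)\<close> into a
martingale along the parent choices. There are such solutions of the form
\<open>(T-1)\<cdots>(T-k) \<cdot> p(W,B)\<close> for \<open>p = W, W(W-1), B-2W, WB-2W\<^sup>2+2W, (B-2W)\<^sup>2-4W-2B\<close>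
with \<open>k = 1, 2, 2, 3, 4\<close> respectively;
as \<open>T\<close> grows deterministically, each yields \<open>E[p(W,B)]\<close>, and \<open>W\<^sup>2\<close>, \<open>B\<^sup>2\<close> are linear
combinations of these five polynomials.\<close>

lemma count_choice_mset: "count (choice_mset n d) v = (if v < n then Suc (d v) else 0)"
  by (induction n) (auto simp: choice_mset_def)

lemma size_choice_mset: "size (choice_mset n d) = n + (\<Sum>v<n. d v)"
  by (induction n) (auto simp: choice_mset_def)

lemma set_mset_choice_mset: "set_mset (choice_mset n d) = {..<n}"
  by (auto simp: set_mset_def count_choice_mset)

lemma choice_mset_nonempty: "0 < n \<Longrightarrow> choice_mset n d \<noteq> {#}"
  by (auto dest: arg_cong[of _ _ size] simp: size_choice_mset)

lemma set_pmf_choice_step: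
  "0 < n \<Longrightarrow> set_pmf (choice_step n d) = (\<lambda>v. d(v := Suc (d v))) ` {..<n}"
  by (simp add: choice_step_def set_pmf_of_multiset choice_mset_nonempty set_mset_choice_mset)

lemma finite_set_pmf_choice_step: "0 < n \<Longrightarrow> finite (set_pmf (choice_step n d))"
  by (simp add: set_pmf_choice_step)

lemma finite_set_pmf_parents: "0 < n \<Longrightarrow> finite (set_pmf (parents n s d))"
  by (induction s) (auto simp: finite_set_pmf_choice_step)

lemma sum_fun_upd_Suc:
  fixes d :: "'a \<Rightarrow> nat"
  assumes "finite A" "v \<in> A"
  shows "sum (d(v := Suc (d v))) A = Suc (sum d A)"
  using assms by (simp add: sum.remove[OF assms])

lemma set_pmf_parents_outdegrees:
  assumes "0 < n" "d' \<in> set_pmf (parents n s d)"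
  shows "(\<Sum>v<n. d' v) = (\<Sum>v<n. d v) + s \<and> (\<forall>v\<ge>n. d' v = d v)"
  using assms(2)
proof (induction s arbitrary: d')
  case (Suc s)
  then obtain d0 v where d0: "d0 \<in> set_pmf (parents n s d)" and "v < n"
    and d': "d' = d0(v := Suc (d0 v))"
    using assms(1) by (auto simp: set_pmf_choice_step)
  have "(\<Sum>u<n. d' u) = Suc (\<Sum>u<n. d0 u)"
    unfolding d' using \<open>v < n\<close> by (intro sum_fun_upd_Suc) auto
  then show ?case
    using Suc.IH[OF d0] \<open>v < n\<close> d' by auto
qed simp

lemma set_pmf_circuit_outdegrees:
  "d \<in> set_pmf (circuit m k) \<Longrightarrow> (\<Sum>v<Suc k. d v) = m * k \<and> (\<forall>v>k. d v = 0)"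
proof (induction k arbitrary: d)
  case (Suc k)
  then obtain d0 where d0: "d0 \<in> set_pmf (circuit m k)"
    and d: "d \<in> set_pmf (parents (Suc k) m d0)"
    by auto
  note IH = Suc.IH[OF d0]
  note step = set_pmf_parents_outdegrees[OF _ d, simplified]
  have "(\<Sum>v<Suc (Suc k). d v) = (\<Sum>v<Suc k. d0 v) + m"
    using step IH by simp
  then show ?case
    using step IH by auto
qed simp

lemma white_fun_upd_Suc:
  assumes "v < n"
  shows "real (white n (d(v := Suc (d v)))) = real (white n d) - (if d v = 0 then 1 else 0)"
proof -
  let ?S = "{u. u < n \<and> d u = 0}"
  have upd: "{u. u < n \<and> (d(v := Suc (d v))) u = 0} = ?S - {v}"
    by auto
  show ?thesis
  proof (cases "d v = 0")
    case True
    then have "card ?S = Suc (card (?S - {v}))"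
      using assms by (intro card.remove) auto
    then show ?thesis
      unfolding white_def upd using True by simp
  next
    case False
    then have "?S - {v} = ?S"
      by auto
    then show ?thesis
      unfolding white_def upd using False by simp
  qed
qed

lemma blue_fun_upd_Suc:
  assumes "v < n"
  shows "real (blue n (d(v := Suc (d v))))
    = real (blue n d) + (if d v = 0 then 2 else if d v = 1 then -2 else 0)"
proof -
  let ?S = "{u. u < n \<and> d u = 1}"
  consider "d v = 0" | "d v = 1" | "d v \<noteq> 0 \<and> d v \<noteq> 1"
    by blast
  then show ?thesis
  proof cases
    case 1
    then have "{u. u < n \<and> (d(v := Suc (d v))) u = 1} = insert v ?S"
      using assms by auto
    then show ?thesis
      unfolding blue_def using 1 by simp
  next
    case 2
    then have upd: "{u. u < n \<and> (d(v := Suc (d v))) u = 1} = ?S - {v}"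
      by auto
    have "card ?S = Suc (card (?S - {v}))"
      using 2 assms by (intro card.remove) auto
    then show ?thesis
      unfolding blue_def upd using 2 by simp
  next
    case 3
    then have upd: "{u. u < n \<and> (d(v := Suc (d v))) u = 1} = ?S"
      by auto
    show ?thesis
      unfolding blue_def upd using 3 by simp
  qed
qed

lemma size_choice_mset_fun_upd_Suc:
  "v < n \<Longrightarrow> size (choice_mset n (d(v := Suc (d v)))) = Suc (size (choice_mset n d))"
  unfolding size_choice_mset by (subst sum_fun_upd_Suc) auto

lemma sum_weight_by_colour:
  fixes a b c :: real
  shows "(\<Sum>v<n. real (Suc (d v)) * (if d v = 0 then a else if d v = 1 then b else c))
    = real (size (choice_mset n d)) * c + real (white n d) * (a - c) + real (blue n d) * (b - c)"
proof -
  have size: "real (size (choice_mset n d)) = (\<Sum>v<n. real (Suc (d v)))"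
    by (induction n) (auto simp: choice_mset_def)
  have white: "(\<Sum>v<n. if d v = 0 then a - c else 0) = real (white n d) * (a - c)"
    by (simp add: sum.If_cases white_def lessThan_def Int_def)
  have blue: "(\<Sum>v<n. if d v = 1 then 2 * (b - c) else 0) = real (blue n d) * (b - c)"
    by (simp add: sum.If_cases blue_def lessThan_def Int_def)
  have "(\<Sum>v<n. real (Suc (d v)) * (if d v = 0 then a else if d v = 1 then b else c))
      = (\<Sum>v<n. real (Suc (d v)) * c
          + (if d v = 0 then a - c else 0) + (if d v = 1 then 2 * (b - c) else 0))"
    by (rule sum.cong) (auto simp: algebra_simps)
  also have "\<dots> = (\<Sum>v<n. real (Suc (d v))) * c + (\<Sum>v<n. if d v = 0 then a - c else 0)
      + (\<Sum>v<n. if d v = 1 then 2 * (b - c) else 0)"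
    by (simp only: sum.distrib sum_distrib_right)
  finally show ?thesis
    by (simp only: size white blue)
qed

lemma expectation_choice_step:
  fixes f :: "(nat \<Rightarrow> nat) \<Rightarrow> real"
  assumes "0 < n"
  shows "measure_pmf.expectation (choice_step n d) f
    = (\<Sum>v<n. real (Suc (d v)) * f (d(v := Suc (d v)))) / real (size (choice_mset n d))"
proof -
  let ?M = "choice_mset n d"
  have M: "?M \<noteq> {#}"
    using assms by (rule choice_mset_nonempty)
  have "measure_pmf.expectation (choice_step n d) f
      = (\<Sum>v<n. f (d(v := Suc (d v))) * pmf (pmf_of_multiset ?M) v)"
    unfolding choice_step_def
    by (simp, rule integral_measure_pmf_real)
      (auto simp: set_pmf_of_multiset[OF M] set_mset_choice_mset)
  also have "\<dots> = (\<Sum>v<n. real (Suc (d v)) * f (d(v := Suc (d v)))) / real (size ?M)"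
    unfolding sum_divide_distrib
    by (intro sum.cong) (auto simp: pmf_of_multiset[OF M] count_choice_mset)
  finally show ?thesis .
qed

text \<open>\<open>T \<cdot> H T W B\<close> is \<open>T\<close> times the expectation of \<open>H\<close> after one parent choice, which
hits \<open>W\<close> white, \<open>B\<close> blue and \<open>T - W - B\<close> red external nodes.\<close>

definition harmonic :: "(real \<Rightarrow> real \<Rightarrow> real \<Rightarrow> real) \<Rightarrow> bool" where
  "harmonic H \<longleftrightarrow> (\<forall>T W B. T * H T W B
     = W * H (T + 1) (W - 1) (B + 2) + B * H (T + 1) W (B - 2) + (T - W - B) * H (T + 1) W B)"

lemma expectation_choice_step_harmonic:
  assumes "0 < n" "harmonic H"
  shows "measure_pmf.expectation (choice_step n d)
      (\<lambda>d'. H (real (size (choice_mset n d'))) (real (white n d')) (real (blue n d')))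
    = H (real (size (choice_mset n d))) (real (white n d)) (real (blue n d))"
proof -
  define T where "T = real (size (choice_mset n d))"
  define W where "W = real (white n d)"
  define B where "B = real (blue n d)"
  let ?a = "H (T + 1) (W - 1) (B + 2)" and ?b = "H (T + 1) W (B - 2)" and ?c = "H (T + 1) W B"
  have "size (choice_mset n d) > 0"
    using assms(1) by (simp add: size_choice_mset)
  then have "T > 0"
    by (simp add: T_def)
  have upd: "H (real (size (choice_mset n (d(v := Suc (d v))))))
      (real (white n (d(v := Suc (d v))))) (real (blue n (d(v := Suc (d v)))))
    = (if d v = 0 then ?a else if d v = 1 then ?b else ?c)" if "v < n" for v
  proof -
    have "real (size (choice_mset n (d(v := Suc (d v))))) = T + 1"
      using that by (simp add: T_def size_choice_mset_fun_upd_Suc)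
    then show ?thesis
      using that by (simp add: W_def B_def white_fun_upd_Suc blue_fun_upd_Suc)
  qed
  have "measure_pmf.expectation (choice_step n d)
      (\<lambda>d'. H (real (size (choice_mset n d'))) (real (white n d')) (real (blue n d')))
    = (\<Sum>v<n. real (Suc (d v)) * (if d v = 0 then ?a else if d v = 1 then ?b else ?c)) / T"
    unfolding expectation_choice_step[OF assms(1)] T_def[symmetric]
    by (intro arg_cong2[where f = "(/)"] sum.cong) (simp_all add: upd)
  also have "\<dots> = (W * ?a + B * ?b + (T - W - B) * ?c) / T"
    unfolding sum_weight_by_colour T_def[symmetric] W_def[symmetric] B_def[symmetric]
    by (simp add: algebra_simps)
  also have "\<dots> = H T W B"
  proof -
    have "T * H T W B = W * ?a + B * ?b + (T - W - B) * ?c"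
      using assms(2) by (simp add: harmonic_def)
    then show ?thesis
      using \<open>T > 0\<close> by (simp add: divide_eq_eq mult.commute)
  qed
  finally show ?thesis
    by (simp add: T_def W_def B_def)
qed

lemma expectation_parents_harmonic:
  assumes "0 < n" "harmonic H"
  shows "measure_pmf.expectation (parents n s d)
      (\<lambda>d'. H (real (size (choice_mset n d'))) (real (white n d')) (real (blue n d')))
    = H (real (size (choice_mset n d))) (real (white n d)) (real (blue n d))"
proof (induction s)
  case (Suc s)
  let ?p = "parents n s d"
  let ?h = "\<lambda>d'. H (real (size (choice_mset n d'))) (real (white n d')) (real (blue n d'))"
  have fin: "finite (set_pmf ?p)"
    using assms(1) by (rule finite_set_pmf_parents)
  have "measure_pmf.expectation (parents n (Suc s) d) ?h
      = (\<Sum>a\<in>set_pmf ?p. pmf ?p a *\<^sub>R measure_pmf.expectation (choice_step n a) ?h)"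
    unfolding parents.simps using assms(1)
    by (intro pmf_expectation_bind[OF fin]) (auto simp: finite_set_pmf_choice_step)
  also have "\<dots> = (\<Sum>a\<in>set_pmf ?p. ?h a * pmf ?p a)"
    using assms by (simp add: expectation_choice_step_harmonic mult.commute)
  also have "\<dots> = measure_pmf.expectation ?p ?h"
    by (rule integral_measure_pmf_real[symmetric]) (use fin in auto)
  finally show ?case
    using Suc.IH by simp
qed simp

text \<open>After \<open>s\<close> choices the total weight is deterministic, namely \<open>T + s\<close>.\<close>

lemma expectation_parents_harmonic_product:
  assumes "0 < n" "harmonic (\<lambda>T W B. c T * G W B)"
    and "c (real (size (choice_mset n d)) + real s) \<noteq> 0"
  shows "measure_pmf.expectation (parents n s d) (\<lambda>d'. G (real (white n d')) (real (blue n d')))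
    = c (real (size (choice_mset n d))) * G (real (white n d)) (real (blue n d))
      / c (real (size (choice_mset n d)) + real s)"
proof -
  let ?p = "parents n s d" and ?T = "real (size (choice_mset n d)) + real s"
  have T: "real (size (choice_mset n d')) = ?T" if "d' \<in> set_pmf ?p" for d'
    using set_pmf_parents_outdegrees[OF assms(1) that] by (simp add: size_choice_mset)
  have "measure_pmf.expectation ?p (\<lambda>d'. c (real (size (choice_mset n d')))
        * G (real (white n d')) (real (blue n d')))
      = measure_pmf.expectation ?p (\<lambda>d'. c ?T * G (real (white n d')) (real (blue n d')))"
    by (rule integral_cong_AE) (auto simp: AE_measure_pmf_iff T)
  then show ?thesis
    using expectation_parents_harmonic[OF assms(1,2), of s d] assms(3) by simp
qed

lemma harmonic_white: "harmonic (\<lambda>T W B. (T - 1) * W)"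
  unfolding harmonic_def by (intro allI) algebra

lemma harmonic_white_pair: "harmonic (\<lambda>T W B. ((T - 1) * (T - 2)) * (W * (W - 1)))"
  unfolding harmonic_def by (intro allI) algebra

lemma harmonic_blue_excess: "harmonic (\<lambda>T W B. ((T - 1) * (T - 2)) * (B - 2 * W))"
  unfolding harmonic_def by (intro allI) algebra

lemma harmonic_white_blue:
  "harmonic (\<lambda>T W B. ((T - 1) * (T - 2) * (T - 3)) * (W * B - 2 * W\<^sup>2 + 2 * W))"
  unfolding harmonic_def by (intro allI) algebra

lemma harmonic_blue_excess_sq:
  "harmonic (\<lambda>T W B.
     ((T - 1) * (T - 2) * (T - 3) * (T - 4)) * ((B - 2 * W)\<^sup>2 - 4 * W - 2 * B))"
  unfolding harmonic_def by (intro allI) algebra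

lemma integrable_parents:
  fixes f :: "(nat \<Rightarrow> nat) \<Rightarrow> real"
  shows "0 < n \<Longrightarrow> integrable (measure_pmf (parents n s d)) f"
  by (simp add: integrable_measure_pmf_finite finite_set_pmf_parents)

lemma expectation_parents_white_sq:
  assumes "0 < n" "3 \<le> size (choice_mset n d) + s"
  defines "T \<equiv> real (size (choice_mset n d))" and "W \<equiv> real (white n d)"
  shows "measure_pmf.expectation (parents n s d) (\<lambda>d'. (real (white n d'))\<^sup>2)
    = (T - 1) * W * ((T - 2) * W + real s) / ((T + real s - 2) * (T + real s - 1))"
proof -
  let ?E = "measure_pmf.expectation (parents n s d)"
  have "T + real s \<ge> 3"
    using assms(2) unfolding T_def by linarith
  then have nz: "T + real s - 1 \<noteq> 0" "T + real s - 2 \<noteq> 0"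
    by auto
  have E_white: "?E (\<lambda>d'. real (white n d')) = (T - 1) * W / (T + real s - 1)"
    using expectation_parents_harmonic_product[OF assms(1) harmonic_white, of d s] nz
    by (simp add: T_def W_def)
  have E_white_pair: "?E (\<lambda>d'. real (white n d') * (real (white n d') - 1))
      = ((T - 1) * (T - 2)) * (W * (W - 1)) / ((T + real s - 1) * (T + real s - 2))"
    using expectation_parents_harmonic_product[OF assms(1) harmonic_white_pair, of d s] nz
    by (simp add: T_def W_def)
  have "?E (\<lambda>d'. (real (white n d'))\<^sup>2)
      = ?E (\<lambda>d'. real (white n d') * (real (white n d') - 1)) + ?E (\<lambda>d'. real (white n d'))"
    using assms(1) by (simp add: integrable_parents power2_eq_square algebra_simps)
  also have "\<dots> = (T - 1) * W * ((T - 2) * W + real s) / ((T + real s - 2) * (T + real s - 1))"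
    unfolding E_white E_white_pair using nz by (simp add: divide_simps) algebra
  finally show ?thesis .
qed

lemma expectation_parents_blue_sq:
  assumes "0 < n" "5 \<le> size (choice_mset n d) + s"
  defines "T \<equiv> real (size (choice_mset n d))" and "W \<equiv> real (white n d)"
    and "B \<equiv> real (blue n d)"
  shows "measure_pmf.expectation (parents n s d) (\<lambda>d'. (real (blue n d'))\<^sup>2)
    = (T - 1) * (4 * real s * (real s - 1) * (T - 2) * W\<^sup>2
        + 4 * real s * (T - 3) * (T - 2) * W * B + (T - 4) * (T - 3) * (T - 2) * B\<^sup>2
        + 4 * real s * (T\<^sup>2 + T * real s - 6 * T + (real s)\<^sup>2 - 5 * real s + 10) * W
        + 2 * real s * (T - 2) * (2 * T + real s - 7) * B)
      / ((T + real s - 4) * (T + real s - 3) * (T + real s - 2) * (T + real s - 1))"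
proof -
  let ?E = "measure_pmf.expectation (parents n s d)"
  let ?W = "\<lambda>d'. real (white n d')" and ?B = "\<lambda>d'. real (blue n d')"
  have "T + real s \<ge> 5"
    using assms(2) unfolding T_def by linarith
  then have nz: "T + real s - 1 \<noteq> 0" "T + real s - 2 \<noteq> 0"
    "T + real s - 3 \<noteq> 0" "T + real s - 4 \<noteq> 0"
    by auto
  have E_white: "?E ?W = (T - 1) * W / (T + real s - 1)"
    using expectation_parents_harmonic_product[OF assms(1) harmonic_white, of d s] nz
    by (simp add: T_def W_def)
  have E_white_pair: "?E (\<lambda>d'. ?W d' * (?W d' - 1))
      = ((T - 1) * (T - 2)) * (W * (W - 1)) / ((T + real s - 1) * (T + real s - 2))"
    using expectation_parents_harmonic_product[OF assms(1) harmonic_white_pair, of d s] nz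
    by (simp add: T_def W_def)
  have E_excess: "?E (\<lambda>d'. ?B d' - 2 * ?W d')
      = ((T - 1) * (T - 2)) * (B - 2 * W) / ((T + real s - 1) * (T + real s - 2))"
    using expectation_parents_harmonic_product[OF assms(1) harmonic_blue_excess, of d s] nz
    by (simp add: T_def W_def B_def)
  have E_white_blue: "?E (\<lambda>d'. ?W d' * ?B d' - 2 * (?W d')\<^sup>2 + 2 * ?W d')
      = ((T - 1) * (T - 2) * (T - 3)) * (W * B - 2 * W\<^sup>2 + 2 * W)
        / ((T + real s - 1) * (T + real s - 2) * (T + real s - 3))"
    using expectation_parents_harmonic_product[OF assms(1) harmonic_white_blue, of d s] nz
    by (simp add: T_def W_def B_def)
  have E_excess_sq: "?E (\<lambda>d'. (?B d' - 2 * ?W d')\<^sup>2 - 4 * ?W d' - 2 * ?B d')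
      = ((T - 1) * (T - 2) * (T - 3) * (T - 4)) * ((B - 2 * W)\<^sup>2 - 4 * W - 2 * B)
        / ((T + real s - 1) * (T + real s - 2) * (T + real s - 3) * (T + real s - 4))"
    using expectation_parents_harmonic_product[OF assms(1) harmonic_blue_excess_sq, of d s] nz
    by (simp add: T_def W_def B_def)
  have "?E (\<lambda>d'. (?B d')\<^sup>2)
      = ?E (\<lambda>d'. ((?B d' - 2 * ?W d')\<^sup>2 - 4 * ?W d' - 2 * ?B d')
          + 4 * (?W d' * ?B d' - 2 * (?W d')\<^sup>2 + 2 * ?W d') + 4 * (?W d' * (?W d' - 1))
          + 2 * (?B d' - 2 * ?W d') + 4 * ?W d')"
    by (rule arg_cong[where f = ?E]) (simp add: power2_eq_square algebra_simps)
  also have "\<dots> = ?E (\<lambda>d'. (?B d' - 2 * ?W d')\<^sup>2 - 4 * ?W d' - 2 * ?B d')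
      + 4 * ?E (\<lambda>d'. ?W d' * ?B d' - 2 * (?W d')\<^sup>2 + 2 * ?W d')
      + 4 * ?E (\<lambda>d'. ?W d' * (?W d' - 1)) + 2 * ?E (\<lambda>d'. ?B d' - 2 * ?W d') + 4 * ?E ?W"
    using assms(1) by (simp add: integrable_parents)
  also have "\<dots> = (T - 1) * (4 * real s * (real s - 1) * (T - 2) * W\<^sup>2
        + 4 * real s * (T - 3) * (T - 2) * W * B + (T - 4) * (T - 3) * (T - 2) * B\<^sup>2
        + 4 * real s * (T\<^sup>2 + T * real s - 6 * T + (real s)\<^sup>2 - 5 * real s + 10) * W
        + 2 * real s * (T - 2) * (2 * T + real s - 7) * B)
      / ((T + real s - 4) * (T + real s - 3) * (T + real s - 2) * (T + real s - 1))"
    unfolding E_white E_white_pair E_excess E_white_blue E_excess_sq using nz by (simp add: divide_simps) algebra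
  finally show ?thesis .
qed

theorem proposition2:
  fixes m n :: nat and d :: "nat \<Rightarrow> nat"
  assumes "m \<ge> 1" and "n \<ge> 1" and "(m + 1) * n \<ge> 5"
    and "d \<in> set_pmf (circuit m (n - 1))"
  defines "W \<equiv> real (white n d)" and "B \<equiv> real (blue n d)"
    and "M \<equiv> real m" and "N \<equiv> real n"
  shows
    "measure_pmf.expectation (parents n m d) (\<lambda>d'. (real (white n d'))\<^sup>2)
       = (M + 1) * (N - 1) * ((M*N - M + N - 2) * W + M) * W
         / ((M*N + N - 2) * (M*N + N - 1))
    \<and>
     measure_pmf.expectation (parents n m d) (\<lambda>d'. (real (blue n d'))\<^sup>2)
       = (M + 1) * (N - 1) *
         ( (4*M*(M - 1)*(M*N - M + N - 2)) * W\<^sup>2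
         + (4*M*(M*N - M + N - 3)*(M*N - M + N - 2)) * W * B
         + ((M*N - M + N - 4)*(M*N - M + N - 3)*(M*N - M + N - 2)) * B\<^sup>2
         + (4*M*(M^2*N^2 - M^2*N + 2*M*N^2 + M^2 - 7*M*N + N^2 + M - 6*N + 10)) * W
         + (2*M*(M*N - M + N - 2)*(2*M*N - M + 2*N - 7)) * B )
         / ((M*N + N - 4) * (M*N + N - 3) * (M*N + N - 2) * (M*N + N - 1))"
proof -
  have "0 < n"
    using assms(2) by simp
  obtain k where n: "n = Suc k"
    using assms(2) by (cases n) auto
  have weight: "size (choice_mset n d) = n + m * k"
    using set_pmf_circuit_outdegrees[OF assms(4)] by (simp add: size_choice_mset n)
  have T: "real (size (choice_mset n d)) = M*N - M + N"
    unfolding weight by (simp add: M_def N_def n algebra_simps)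
  have five: "5 \<le> size (choice_mset n d) + m"
    using assms(3) unfolding weight by (simp add: n algebra_simps)
  then have three: "3 \<le> size (choice_mset n d) + m"
    by simp
  show ?thesis
    unfolding expectation_parents_white_sq[OF \<open>0 < n\<close> three]
      expectation_parents_blue_sq[OF \<open>0 < n\<close> five]
      T W_def[symmetric] B_def[symmetric] M_def[symmetric]
    by (intro conjI arg_cong2[where f = "(/)"]) algebra+
qed

end
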